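(* Let $\alpha$ be a proper fraction ($0<\alpha<1$) and let $u=(u_k)$ be a sequence with $u_k\neq 0$ for all $k\in\mathbb{N}$. Then the sequence space $c_0(\Gamma,\Delta^{(\alpha)},u)=\{x\in\omega:(\sum_{j=0}^k u_j\Delta^{(\alpha)}x_j)_{k}\in c_0\}$ is linearly isomorphic to $c_0$, and the sequence space $c(\Gamma,\Delta^{(\alpha)},u)=\{x\in\omega:(\sum_{j=0}^k u_j\Delta^{(\alpha)}x_j)_{k}\in c\}$ is linearly isomorphic to $c$.
   Context: $\omega$ denotes the space of all real or complex sequences, $c$ the space of convergent sequences and $c_0$ the space of null sequences; $\mathbb{N}=\{0,1,2,\dots\}$. For $x=(x_k)\in\omega$ the fractional difference operator is $\Delta^{(\alpha)}x_k=\sum_{i=0}^{\infty}(-1)^i\frac{\Gamma(\alpha+1)}{i!\,\Gamma(\alpha+1-i)}x_{k-i}$, where $\Gamma$ is the gamma function and $x_j=0$ for $j<0$. *)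

theory Defs
  imports "HOL-Analysis.Analysis"
begin

text \<open>Fractional difference operator; terms with negative index vanish, so the
  infinite sum reduces to the finite sum over i = 0..k.\<close>
definition frac_diff :: "real \<Rightarrow> (nat \<Rightarrow> 'a::{real_normed_field}) \<Rightarrow> nat \<Rightarrow> 'a" where
  "frac_diff \<alpha> x k =
     (\<Sum>i\<le>k. of_real ((-1) ^ i * Gamma (\<alpha> + 1) / (fact i * Gamma (\<alpha> + 1 - real i))) * x (k - i))"

definition gamma_transform :: "real \<Rightarrow> (nat \<Rightarrow> 'a::{real_normed_field}) \<Rightarrow> (nat \<Rightarrow> 'a) \<Rightarrow> nat \<Rightarrow> 'a" where
  "gamma_transform \<alpha> u x k = (\<Sum>j\<le>k. u j * frac_diff \<alpha> x j)"

definition null_seqs :: "(nat \<Rightarrow> 'a::real_normed_field) set" where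
  "null_seqs = {x. x \<longlonglongrightarrow> 0}"

definition conv_seqs :: "(nat \<Rightarrow> 'a::real_normed_field) set" where
  "conv_seqs = {x. convergent x}"

definition c0_Gamma :: "real \<Rightarrow> (nat \<Rightarrow> 'a::real_normed_field) \<Rightarrow> (nat \<Rightarrow> 'a) set" where
  "c0_Gamma \<alpha> u = {x. gamma_transform \<alpha> u x \<in> null_seqs}"

definition c_Gamma :: "real \<Rightarrow> (nat \<Rightarrow> 'a::real_normed_field) \<Rightarrow> (nat \<Rightarrow> 'a) set" where
  "c_Gamma \<alpha> u = {x. gamma_transform \<alpha> u x \<in> conv_seqs}"

definition lin_iso :: "(nat \<Rightarrow> 'a::field) set \<Rightarrow> (nat \<Rightarrow> 'a) set \<Rightarrow> bool" where
  "lin_iso S T \<longleftrightarrow> (\<exists>f. bij_betw f S T \<and>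
      (\<forall>x\<in>S. \<forall>y\<in>S. f (\<lambda>k. x k + y k) = (\<lambda>k. f x k + f y k)) \<and>
      (\<forall>c. \<forall>x\<in>S. f (\<lambda>k. c * x k) = (\<lambda>k. c * f x k)))"

end

theory Submission
  imports Defs
begin

text \<open>The transform factors as x \<mapsto> \<Delta>(\<alpha>) x followed by weighted partial summation with
  the nonzero weights u. The first map is a Cauchy convolution whose leading coefficient
  is 1, so it is inverted by solving a lower triangular system; the second is inverted by
  taking weighted differences. Hence the transform is a linear bijection of all sequences,
  and restricts to a linear isomorphism between the preimage of c0 (resp. c) and
  c0 (resp. c).\<close>

definition cauchy_conv :: "(nat \<Rightarrow> 'a::comm_semiring_1) \<Rightarrow> (nat \<Rightarrow> 'a) \<Rightarrow> nat \<Rightarrow> 'a" where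
  "cauchy_conv a x k = (\<Sum>i\<le>k. a i * x (k - i))"

fun cauchy_conv_solve :: "(nat \<Rightarrow> 'a::comm_ring_1) \<Rightarrow> (nat \<Rightarrow> 'a) \<Rightarrow> nat \<Rightarrow> 'a" where
  "cauchy_conv_solve a w k = w k - (\<Sum>i\<in>{1..k}. a i * cauchy_conv_solve a w (k - i))"

declare cauchy_conv_solve.simps[simp del]

lemma cauchy_conv_split_head:
  assumes "a 0 = 1"
  shows "cauchy_conv a x k = x k + (\<Sum>i\<in>{1..k}. a i * x (k - i))"
proof -
  have "{..k} = insert 0 {1..k}" by auto
  thus ?thesis unfolding cauchy_conv_def using assms by simp
qed

lemma cauchy_conv_cauchy_conv_solve:
  assumes "a 0 = 1"
  shows "cauchy_conv a (cauchy_conv_solve a w) = w"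
  by (rule ext, subst cauchy_conv_split_head[of a, OF assms]) (subst cauchy_conv_solve.simps, simp)

lemma cauchy_conv_inj:
  fixes a :: "nat \<Rightarrow> 'a::comm_ring_1"
  assumes a0: "a 0 = 1"
  shows "inj (cauchy_conv a)"
proof (rule injI)
  fix x y assume eq: "cauchy_conv a x = cauchy_conv a y"
  have "x k = y k" for k
  proof (induction k rule: less_induct)
    case (less k)
    have "(\<Sum>i\<in>{1..k}. a i * x (k - i)) = (\<Sum>i\<in>{1..k}. a i * y (k - i))"
      using less by (intro sum.cong) auto
    thus ?case using fun_cong[OF eq, of k] by (simp add: cauchy_conv_split_head[of a, OF a0])
  qed
  thus "x = y" by blast
qed

lemma bij_cauchy_conv:
  fixes a :: "nat \<Rightarrow> 'a::comm_ring_1"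
  assumes "a 0 = 1"
  shows "bij (cauchy_conv a)"
  using cauchy_conv_inj[of a, OF assms] cauchy_conv_cauchy_conv_solve[of a, OF assms]
  by (metis bijI surjI)

definition weighted_partial_sums :: "(nat \<Rightarrow> 'a::comm_semiring_1) \<Rightarrow> (nat \<Rightarrow> 'a) \<Rightarrow> nat \<Rightarrow> 'a" where
  "weighted_partial_sums u z k = (\<Sum>j\<le>k. u j * z j)"

lemma bij_weighted_partial_sums:
  fixes u :: "nat \<Rightarrow> 'a::field"
  assumes u: "\<And>k. u k \<noteq> 0"
  shows "bij (weighted_partial_sums u)"
proof (rule bijI)
  show "inj (weighted_partial_sums u)"
  proof (rule injI)
    fix z z' assume eq: "weighted_partial_sums u z = weighted_partial_sums u z'"
    have "z k = z' k" for k
    proof (cases k)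
      case 0
      thus ?thesis using fun_cong[OF eq, of 0] u[of 0] by (simp add: weighted_partial_sums_def)
    next
      case (Suc j)
      thus ?thesis using fun_cong[OF eq, of j] fun_cong[OF eq, of k] u[of k]
        by (simp add: weighted_partial_sums_def)
    qed
    thus "z = z'" by blast
  qed
  show "surj (weighted_partial_sums u)"
  proof (rule surjI)
    fix y
    define z where "z k = (if k = 0 then y 0 else y k - y (k - 1)) / u k" for k
    show "weighted_partial_sums u z = y"
    proof
      fix k show "weighted_partial_sums u z k = y k"
        by (induction k) (use u in \<open>simp_all add: weighted_partial_sums_def z_def\<close>)
    qed
  qed
qed

definition frac_coeff :: "real \<Rightarrow> nat \<Rightarrow> 'a::real_normed_field" where
  "frac_coeff \<alpha> i = of_real ((-1) ^ i * Gamma (\<alpha> + 1) / (fact i * Gamma (\<alpha> + 1 - real i)))"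

lemma frac_diff_eq_cauchy_conv: "frac_diff \<alpha> = cauchy_conv (frac_coeff \<alpha>)"
  unfolding frac_diff_def cauchy_conv_def frac_coeff_def by (intro ext) simp

lemma frac_coeff_0:
  assumes "\<alpha> > -1"
  shows "frac_coeff \<alpha> 0 = 1"
proof -
  have "Gamma (\<alpha> + 1) > 0" using assms by (intro Gamma_real_pos) simp
  thus ?thesis unfolding frac_coeff_def by simp
qed

lemma gamma_transform_eq_comp:
  "gamma_transform \<alpha> u = weighted_partial_sums u \<circ> frac_diff \<alpha>"
  unfolding gamma_transform_def weighted_partial_sums_def by (intro ext) simp

lemma bij_gamma_transform:
  fixes u :: "nat \<Rightarrow> 'a::real_normed_field"
  assumes "\<alpha> > -1" and "\<And>k. u k \<noteq> 0"
  shows "bij (gamma_transform \<alpha> u)"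
  unfolding gamma_transform_eq_comp frac_diff_eq_cauchy_conv
  using bij_comp bij_cauchy_conv[of "frac_coeff \<alpha>", OF frac_coeff_0] bij_weighted_partial_sums assms by blast

lemma gamma_transform_add:
  "gamma_transform \<alpha> u (\<lambda>k. x k + y k) = (\<lambda>k. gamma_transform \<alpha> u x k + gamma_transform \<alpha> u y k)"
  unfolding gamma_transform_def frac_diff_eq_cauchy_conv cauchy_conv_def by (simp add: algebra_simps sum.distrib)

lemma gamma_transform_scale:
  "gamma_transform \<alpha> u (\<lambda>k. c * x k) = (\<lambda>k. c * gamma_transform \<alpha> u x k)"
  unfolding gamma_transform_def frac_diff_eq_cauchy_conv cauchy_conv_def by (simp add: algebra_simps sum_distrib_left)

lemma lin_iso_preimage:
  fixes f :: "(nat \<Rightarrow> 'a::field) \<Rightarrow> nat \<Rightarrow> 'a"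
  assumes "bij f"
    and "\<And>x y. f (\<lambda>k. x k + y k) = (\<lambda>k. f x k + f y k)"
    and "\<And>c x. f (\<lambda>k. c * x k) = (\<lambda>k. c * f x k)"
  shows "lin_iso {x. f x \<in> S} S"
proof -
  have "bij_betw f {x. f x \<in> S} S"
    using bij_betw_subset[OF assms(1)] bij_is_surj[OF assms(1)]
    by (auto simp: bij_betw_def intro: image_eqI[OF surj_f_inv_f[symmetric]])
  thus ?thesis unfolding lin_iso_def using assms(2,3) by blast
qed

theorem theorem2:
  fixes \<alpha> :: real and u :: "nat \<Rightarrow> 'a::real_normed_field"
  assumes "0 < \<alpha>" and "\<alpha> < 1"
    and "\<And>k. u k \<noteq> 0"
  shows "lin_iso (c0_Gamma \<alpha> u) null_seqs \<and> lin_iso (c_Gamma \<alpha> u) conv_seqs"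
proof -
  have "bij (gamma_transform \<alpha> u)"
    using assms(1,3) by (intro bij_gamma_transform) simp_all
  then have "lin_iso {x. gamma_transform \<alpha> u x \<in> S} S" for S :: "(nat \<Rightarrow> 'a) set"
    by (rule lin_iso_preimage[OF _ gamma_transform_add gamma_transform_scale])
  thus ?thesis unfolding c0_Gamma_def c_Gamma_def by blast
qed

end
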